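(* Let $j\in\mathbb{N}$ and $b,r\in\mathbb{Z}$ with $b\neq0$. Then for every $x\in\mathbb{R}$, $$\sum_{d=-\infty}^{+\infty}\frac{e^{2\pi \mathrm{i} dx}}{\left(d+\frac{r}{b}-\frac{1}{2b}\right)^{j}}=\frac{(2\pi \mathrm{i})^{j}\,\mathrm{sgn}(b)}{2\,(j-1)!\,b^{1-j}}\sum_{l=0}^{|b|-1}e^{-\frac{2\pi \mathrm{i}(l+x)r}{b}+\frac{\pi \mathrm{i}(l+x)}{b}}\,\overline{E}_{j-1}\!\left(\frac{l+x}{b}\right).$$
   Context: $\mathrm{i}^2=-1$. Doubly infinite sums $\sum_{d=-\infty}^{+\infty}$ are interpreted as $\lim_{N\to\infty}\sum_{d=-N}^{N}$ (this matters for $j=1$). $[x]$ is the floor of $x$, $\{x\}=x-[x]$, $E_n(x)$ is the Euler polynomial ($\frac{2e^{xt}}{e^t+1}=\sum_{n\ge0}E_n(x)\frac{t^n}{n!}$). Quasi-periodic Euler functions: $\overline{E}_{0}(x)=(-1)^{[x]}$ if $x\notin\mathbb{Z}$ and $\overline{E}_0(x)=0$ if $x\in\mathbb{Z}$; $\overline{E}_{n}(x)=(-1)^{[x]}E_{n}(\{x\})$ for $n\ge1$. $\mathrm{sgn}(b)=b/|b|$. *)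

theory Defs
  imports "HOL-Analysis.Analysis" "HOL-Computational_Algebra.Formal_Power_Series"
begin

definition euler_poly :: "nat \<Rightarrow> real \<Rightarrow> real" where
  "euler_poly n x = fact n * fps_nth (2 * fps_exp x / (fps_exp 1 + 1)) n"

definition euler_bar :: "nat \<Rightarrow> real \<Rightarrow> real" where
  "euler_bar n x =
     (if n = 0 then (if x \<in> \<int> then 0 else (-1) powi \<lfloor>x\<rfloor>)
      else (-1) powi \<lfloor>x\<rfloor> * euler_poly n (frac x))"

end

theory Submission
  imports Defs
begin

text \<open>The quasi-periodic Euler functions have the Fourier expansion
  \<open>euler_bar n y / (2 n!) = \<Sum>k\<ge>0. 2 cos ((2k+1)\<pi>y - (n+1)\<pi>/2) / ((2k+1)\<pi>)^(n+1)\<close>: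
  for \<open>n = 0\<close> this is the square wave, handled through the Dirichlet kernel and Leibniz' series,
  and each further case follows by termwise integration, the constant being fixed by
  \<open>E_n(1) + E_n(0) = 0\<close>. Writing the cosines as \<open>e^{\<plusminus>\<pi>i m y}\<close> with \<open>m\<close> odd, putting
  \<open>y = (l+x)/b\<close> and summing against the twist over \<open>l = 0..|b|-1\<close> kills every frequency except
  \<open>m = 2bd + 2r - 1\<close>, whose term is a multiple of the \<open>d\<close>-th term of the left-hand side. This proves
  the identity for partial sums over the windows \<open>|2bd + 2r - 1| < 2K\<close>; these differ from
  \<open>[-N, N]\<close> by boundedly many terms, each tending to 0.\<close>

text \<open>\<open>E_n(x)/n!\<close>, written as the Cauchy product of the series of \<open>2 e^{xt}\<close> and \<open>1/(e^t + 1)\<close>,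
  so that differentiation just lowers \<open>n\<close>.\<close>
definition euler_scaled :: "nat \<Rightarrow> real \<Rightarrow> real" where
  "euler_scaled n x = (\<Sum>i=0..n. 2 * x^i / fact i * fps_nth (inverse (fps_exp 1 + 1)) (n - i))"

lemma euler_poly_eq_fact_mult_scaled: "euler_poly n x = fact n * euler_scaled n x"
proof -
  define c :: "real fps" where "c = inverse (fps_exp 1 + 1)"
  have "2 * fps_exp x / (fps_exp 1 + 1) = fps_const 2 * fps_exp x * c"
    unfolding c_def by (subst fps_divide_unit) (simp_all add: numeral_fps_const)
  moreover have "fps_nth (fps_const 2 * fps_exp x * c) n = euler_scaled n x"
    unfolding fps_mult_nth[of "fps_const 2 * fps_exp x"] euler_scaled_def c_def
    by (intro sum.cong refl) (simp add: fps_mult_left_const_nth)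
  ultimately show ?thesis unfolding euler_poly_def by simp
qed

lemma continuous_on_euler_scaled: "continuous_on S (euler_scaled n)"
  unfolding euler_scaled_def[abs_def] by (intro continuous_intros) simp

lemma euler_scaled_0 [simp]: "euler_scaled 0 x = 1"
  by (simp add: euler_scaled_def)

lemma euler_scaled_one_plus_zero:
  assumes "n \<ge> 1"
  shows "euler_scaled n 1 + euler_scaled n 0 = 0"
proof -
  define c :: "real fps" where "c = inverse (fps_exp 1 + 1)"
  have "(fps_exp 1 + 1) * c = 1"
    unfolding c_def by (rule inverse_mult_eq_1') simp
  then have "fps_nth ((fps_exp 1 + 1) * c) n = 0"
    using assms by simp
  then have "fps_nth (fps_exp 1 * c) n + fps_nth c n = 0"
    by (simp add: distrib_right)
  moreover have "fps_nth (fps_exp 1 * c) n = euler_scaled n 1 / 2"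
    unfolding fps_mult_nth euler_scaled_def sum_divide_distrib c_def by (intro sum.cong refl) simp
  moreover have "euler_scaled n 0 = 2 * fps_nth c n"
    unfolding euler_scaled_def c_def by (simp add: sum.atLeast_Suc_atMost zero_power)
  ultimately show ?thesis by simp
qed

lemma has_real_derivative_euler_scaled:
  "(euler_scaled (Suc n) has_real_derivative euler_scaled n x) (at x)"
proof -
  define c :: "nat \<Rightarrow> real" where "c i = 2 * fps_nth (inverse (fps_exp 1 + 1)) (n - i) / fact (Suc i)" for i
  have "euler_scaled (Suc n) = (\<lambda>x. 2 * fps_nth (inverse (fps_exp 1 + 1)) (Suc n) + (\<Sum>i=0..n. c i * x ^ Suc i))"
    by (rule ext) (simp only: euler_scaled_def sum.atLeast0_atMost_Suc_shift, simp add: c_def mult_ac)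
  moreover have "((\<lambda>x. 2 * fps_nth (inverse (fps_exp 1 + 1)) (Suc n) + (\<Sum>i=0..n. c i * x ^ Suc i))
      has_real_derivative 0 + (\<Sum>i=0..n. c i * (real (Suc i) * x ^ i))) (at x)"
    by (intro DERIV_add DERIV_const DERIV_sum DERIV_cmult) (use DERIV_pow[of "Suc _" x] in simp)
  moreover have "(\<Sum>i=0..n. c i * (real (Suc i) * x ^ i)) = euler_scaled n x"
    unfolding euler_scaled_def c_def by (intro sum.cong refl) (simp add: fact_Suc del: of_nat_Suc)
  ultimately show ?thesis by simp
qed

text \<open>The k-th term of the Fourier series of \<open>euler_bar n y / (2 * fact n)\<close>.\<close>
definition fourier_term :: "nat \<Rightarrow> nat \<Rightarrow> real \<Rightarrow> real" where
  "fourier_term n k y =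
     2 * cos ((2 * real k + 1) * pi * y - real (Suc n) * pi / 2) / ((2 * real k + 1) * pi) ^ Suc n"

lemma fourier_term_0:
  "fourier_term 0 k y = 2 * sin ((2 * real k + 1) * pi * y) / ((2 * real k + 1) * pi)"
  by (simp add: fourier_term_def cos_diff)

lemma has_real_derivative_fourier_term:
  "(fourier_term (Suc n) k has_real_derivative fourier_term n k y) (at y)"
proof -
  define w where "w = (2 * real k + 1) * pi"
  have w: "w > 0" unfolding w_def by (simp add: add_pos_nonneg)
  have "fourier_term m k = (\<lambda>y. 2 * cos (w * y - real (Suc m) * pi / 2) / w ^ Suc m)" for m
    by (rule ext) (simp add: fourier_term_def w_def)
  moreover have "- sin (w * y - real (Suc (Suc n)) * pi / 2) = cos (w * y - real (Suc n) * pi / 2)"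
  proof -
    have e: "w * y - real (Suc (Suc n)) * pi / 2 = (w * y - real (Suc n) * pi / 2) - pi / 2"
      by (simp add: field_simps)
    show ?thesis by (simp only: e sin_diff) simp
  qed
  ultimately show ?thesis
    using w by (auto intro!: derivative_eq_intros simp: field_simps)
qed

lemma minus_one_powi_real: "(-1::real) powi m = (if even m then 1 else -1)"
  by (auto simp: power_int_def even_nat_iff)

lemma cos_add_pi_int: "cos (x + pi * real_of_int m) = (-1) powi m * cos x"
  by (simp add: cos_add minus_one_powi_real)

lemma fourier_term_add_int: "fourier_term n k (y + real_of_int z) = (-1) powi z * fourier_term n k y"
proof -
  have "(2 * real k + 1) * pi * (y + real_of_int z) - real (Suc n) * pi / 2
      = ((2 * real k + 1) * pi * y - real (Suc n) * pi / 2) + pi * of_int ((2 * int k + 1) * z)"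
    by (simp add: field_simps)
  moreover have "even ((2 * int k + 1) * z) \<longleftrightarrow> even z" by simp
  ultimately show ?thesis
    unfolding fourier_term_def by (simp only: cos_add_pi_int) (simp add: minus_one_powi_real)
qed

lemma continuous_on_fourier_term: "continuous_on S (fourier_term n k)"
  unfolding fourier_term_def by (intro continuous_intros) (simp add: add_pos_nonneg)

lemma abs_fourier_term_Suc_le: "\<bar>fourier_term (Suc n) k y\<bar> \<le> 2 / (real k + 1)^2"
proof -
  have ge1: "(2 * real k + 1) * pi \<ge> 1"
    using mult_mono[of 1 "2 * real k + 1" 1 pi] pi_ge_two by simp
  have "(real k + 1)^2 \<le> ((2 * real k + 1) * pi)^2"
    using mult_mono[of "real k + 1" "2 * real k + 1" 1 pi] pi_ge_two by (intro power_mono) auto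
  also have "\<dots> \<le> ((2 * real k + 1) * pi) ^ Suc (Suc n)"
    by (intro power_increasing ge1) auto
  finally have "2 / ((2 * real k + 1) * pi) ^ Suc (Suc n) \<le> 2 / (real k + 1)^2"
    by (intro divide_left_mono) auto
  moreover have "\<bar>fourier_term (Suc n) k y\<bar> \<le> 2 / ((2 * real k + 1) * pi) ^ Suc (Suc n)"
    unfolding fourier_term_def using ge1 by (simp add: abs_mult divide_right_mono)
  ultimately show ?thesis by linarith
qed

lemma summable_two_div_square: "summable (\<lambda>k. 2 / (real k + 1)^2)"
  using summable_mult[OF inverse_squares_sums[THEN sums_summable], of 2]
  by (simp add: add.commute)

lemma sin_mult_sum_cos_odd: "sin t * (\<Sum>k<K. 2 * cos ((2 * real k + 1) * t)) = sin (2 * real K * t)"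
proof (induction K)
  case (Suc K)
  have "sin (2 * real (Suc K) * t) = sin (2 * real K * t) + 2 * cos ((2 * real K + 1) * t) * sin t"
    using sin_add[of "(2 * real K + 1) * t" t] sin_diff[of "(2 * real K + 1) * t" t]
    by (simp add: algebra_simps)
  with Suc show ?case by (simp add: algebra_simps)
qed simp

lemma has_real_derivative_fourier_partial_sum_0:
  assumes "sin (pi * t) \<noteq> 0"
  shows "((\<lambda>y. \<Sum>k<K. fourier_term 0 k y) has_real_derivative
           sin (2 * real K * pi * t) / sin (pi * t)) (at t)"
proof -
  have "(fourier_term 0 k has_real_derivative 2 * cos ((2 * real k + 1) * (pi * t))) (at t)" for k
  proof -
    define w where "w = (2 * real k + 1) * pi"
    have "w > 0" unfolding w_def by (simp add: add_pos_nonneg)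
    then have "((\<lambda>y. 2 * sin (w * y) / w) has_real_derivative 2 * cos (w * t)) (at t)"
      by (auto intro!: derivative_eq_intros)
    moreover have "fourier_term 0 k = (\<lambda>y. 2 * sin (w * y) / w)"
      by (rule ext) (simp add: fourier_term_0 w_def)
    ultimately show ?thesis by (simp add: w_def mult_ac)
  qed
  then have "((\<lambda>y. \<Sum>k<K. fourier_term 0 k y) has_real_derivative
      (\<Sum>k<K. 2 * cos ((2 * real k + 1) * (pi * t)))) (at t)"
    by (intro DERIV_sum)
  moreover have "(\<Sum>k<K. 2 * cos ((2 * real k + 1) * (pi * t))) = sin (2 * real K * pi * t) / sin (pi * t)"
    using sin_mult_sum_cos_odd[of "pi * t" K] assms by (simp add: field_simps)
  ultimately show ?thesis by simp
qed

lemma fourier_term_0_sums_half: "(\<lambda>k. fourier_term 0 k (1/2)) sums (1/2)"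
proof -
  have "(\<lambda>k. (-1)^k / real (k*2+1)) sums (pi/4)"
    using arctan_series[of 1] summable_arctan_series[of 1] by (simp add: sums_iff arctan_one)
  then have "(\<lambda>k. 2 / pi * ((-1)^k / real (k*2+1))) sums (2 / pi * (pi/4))"
    by (rule sums_mult)
  moreover have "fourier_term 0 k (1/2) = 2 / pi * ((-1)^k / real (k*2+1))" for k
  proof -
    have "(2 * real k + 1) * pi * (1/2) = real k * pi + pi / 2" by (simp add: field_simps)
    then have "sin ((2 * real k + 1) * pi * (1/2)) = (-1)^k" by (simp only:) (simp add: sin_add)
    then show ?thesis by (simp add: fourier_term_0 field_simps)
  qed
  ultimately show ?thesis by simp
qed

lemma sin_pi_mult_ge:
  assumes "0 < c" "c \<le> t" "t \<le> 1 - c"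
  shows "sin (pi * c) \<le> sin (pi * t)"
proof -
  have "0 \<le> pi * c" using assms by simp
  then have c: "-(pi/2) \<le> pi * c" using pi_gt_zero by linarith
  show ?thesis
  proof (cases "t \<le> 1/2")
    case True
    then show ?thesis using assms by (intro sin_monotone_2pi_le[OF c]) auto
  next
    case False
    have "pi * c \<le> pi * (1 - t)" using assms by simp
    moreover have "pi * (1 - t) \<le> pi / 2" using False by (simp add: field_simps)
    ultimately have "sin (pi * c) \<le> sin (pi * (1 - t))"
      by (intro sin_monotone_2pi_le[OF c])
    also have "sin (pi * (1 - t)) = sin (pi * t)" by (simp add: right_diff_distrib sin_diff)
    finally show ?thesis .
  qed
qed

text \<open>Integration by parts in the Dirichlet kernel: the boundary term
  \<open>cos (2 K \<pi> t) / (2 K \<pi> sin (\<pi> t))\<close> absorbs the oscillation of the partial sums of the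
  square wave and leaves a function whose derivative is \<open>O(1/K)\<close> away from the integers.\<close>
lemma has_real_derivative_square_wave_smoothed:
  assumes t: "sin (pi * t) > 0" and K: "K > 0"
  shows "((\<lambda>t. (\<Sum>k<K. fourier_term 0 k t) + cos (2 * real K * pi * t) / (2 * real K * pi * sin (pi * t)))
           has_real_derivative - cos (2 * real K * pi * t) * cos (pi * t) / (2 * real K * sin (pi * t)^2)) (at t)"
proof -
  have "((\<lambda>t. cos (2 * real K * pi * t) / (2 * real K * pi * sin (pi * t))) has_real_derivative
      (- sin (2 * real K * pi * t) * (2 * real K * pi) * (2 * real K * pi * sin (pi * t)) -
        cos (2 * real K * pi * t) * (2 * real K * pi * (cos (pi * t) * pi))) /
      (2 * real K * pi * sin (pi * t) * (2 * real K * pi * sin (pi * t)))) (at t)"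
    using t K by (intro DERIV_divide) (auto intro!: derivative_eq_intros)
  then have "((\<lambda>t. (\<Sum>k<K. fourier_term 0 k t) + cos (2 * real K * pi * t) / (2 * real K * pi * sin (pi * t)))
      has_real_derivative sin (2 * real K * pi * t) / sin (pi * t) +
      (- sin (2 * real K * pi * t) * (2 * real K * pi) * (2 * real K * pi * sin (pi * t)) -
        cos (2 * real K * pi * t) * (2 * real K * pi * (cos (pi * t) * pi))) /
      (2 * real K * pi * sin (pi * t) * (2 * real K * pi * sin (pi * t)))) (at t)"
    using t by (intro DERIV_add has_real_derivative_fourier_partial_sum_0) simp
  moreover have "sin (2 * real K * pi * t) / sin (pi * t) +
      (- sin (2 * real K * pi * t) * (2 * real K * pi) * (2 * real K * pi * sin (pi * t)) -
        cos (2 * real K * pi * t) * (2 * real K * pi * (cos (pi * t) * pi))) /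
      (2 * real K * pi * sin (pi * t) * (2 * real K * pi * sin (pi * t)))
    = - cos (2 * real K * pi * t) * cos (pi * t) / (2 * real K * sin (pi * t)^2)"
    using t K by (simp add: field_simps power2_eq_square)
  ultimately show ?thesis by (simp only:)
qed

lemma square_wave_partial_sum_bound:
  assumes c: "0 < c" "c \<le> 1/2" and K: "K > 0" and y: "y \<in> {c..1-c}"
  shows "\<bar>(\<Sum>k<K. fourier_term 0 k y) - (\<Sum>k<K. fourier_term 0 k (1/2))\<bar>
           \<le> (1 / (4 * sin (pi * c)^2) + 1 / (pi * sin (pi * c))) / real K"
proof -
  define s where "s = sin (pi * c)"
  have s: "s > 0" unfolding s_def using c by (intro sin_gt_zero) auto
  have sin_ge: "s \<le> sin (pi * t)" if "t \<in> {c..1-c}" for t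
    unfolding s_def using that c by (intro sin_pi_mult_ge) auto
  have half: "1/2 \<in> {c..1-c}" using c by auto
  define F where "F t = cos (2 * real K * pi * t) / (2 * real K * pi * sin (pi * t))" for t
  define G where "G t = (\<Sum>k<K. fourier_term 0 k t) + F t" for t
  have "norm (G y - G (1/2)) \<le> 1 / (2 * real K * s^2) * norm (y - 1/2)"
  proof (rule field_differentiable_bound[OF convex_real_interval(5) _ _ y half])
    fix t assume t: "t \<in> {c..1-c}"
    have st: "sin (pi * t) \<ge> s" using sin_ge[OF t] .
    show "(G has_real_derivative - cos (2 * real K * pi * t) * cos (pi * t) / (2 * real K * sin (pi * t)^2))
        (at t within {c..1-c})"
      unfolding G_def[abs_def] F_def
      using s st K by (intro has_field_derivative_at_within[OF has_real_derivative_square_wave_smoothed]) auto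
    have "norm (- cos (2 * real K * pi * t) * cos (pi * t) / (2 * real K * sin (pi * t)^2))
        = \<bar>cos (2 * real K * pi * t)\<bar> * \<bar>cos (pi * t)\<bar> / (2 * real K * sin (pi * t)^2)"
      by (simp add: abs_mult)
    also have "\<dots> \<le> 1 * 1 / (2 * real K * sin (pi * t)^2)"
      by (intro divide_right_mono mult_mono) auto
    also have "\<dots> \<le> 1 / (2 * real K * s^2)"
      using s st K by (intro frac_le mult_left_mono power_mono mult_pos_pos) auto
    finally show "norm (- cos (2 * real K * pi * t) * cos (pi * t) / (2 * real K * sin (pi * t)^2))
        \<le> 1 / (2 * real K * s^2)" .
  qed
  also have "\<dots> \<le> 1 / (2 * real K * s^2) * (1/2)"
    by (intro mult_left_mono) (use y c in \<open>auto simp: abs_if\<close>)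
  finally have G_diff: "\<bar>G y - G (1/2)\<bar> \<le> 1 / (4 * real K * s^2)" by simp
  have F_bound: "\<bar>F t\<bar> \<le> 1 / (2 * real K * pi * s)" if "t \<in> {c..1-c}" for t
  proof -
    have st: "sin (pi * t) \<ge> s" using sin_ge[OF that] .
    have "\<bar>F t\<bar> = \<bar>cos (2 * real K * pi * t)\<bar> / (2 * real K * pi * sin (pi * t))"
      unfolding F_def using st s by (simp add: abs_mult)
    also have "\<dots> \<le> 1 / (2 * real K * pi * sin (pi * t))"
      using st s K by (intro divide_right_mono) auto
    also have "\<dots> \<le> 1 / (2 * real K * pi * s)"
      using st s K by (intro divide_left_mono mult_left_mono) auto
    finally show ?thesis .
  qed
  have "\<bar>(\<Sum>k<K. fourier_term 0 k y) - (\<Sum>k<K. fourier_term 0 k (1/2))\<bar>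
      \<le> \<bar>G y - G (1/2)\<bar> + \<bar>F y\<bar> + \<bar>F (1/2)\<bar>"
    unfolding G_def by linarith
  also have "\<dots> \<le> 1 / (4 * real K * s^2) + 1 / (2 * real K * pi * s) + 1 / (2 * real K * pi * s)"
    using G_diff F_bound[OF y] F_bound[OF half] by linarith
  also have "\<dots> = (1 / (4 * s^2) + 1 / (pi * s)) / real K"
    using s K by (simp add: field_simps)
  finally show ?thesis unfolding s_def .
qed

lemma uniform_limit_square_wave:
  assumes c: "0 < c" "c \<le> 1/2"
  shows "uniform_limit {c..1-c} (\<lambda>K y. \<Sum>k<K. fourier_term 0 k y) (\<lambda>y. 1/2) sequentially"
  unfolding uniform_limit_iff
proof (intro allI impI)
  fix e :: real assume e: "e > 0"
  define B where "B = 1 / (4 * sin (pi * c)^2) + 1 / (pi * sin (pi * c))"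
  have "(\<lambda>K. \<Sum>k<K. fourier_term 0 k (1/2)) \<longlonglongrightarrow> 1/2"
    using fourier_term_0_sums_half by (simp add: sums_def)
  then have "\<forall>\<^sub>F K in sequentially. dist (\<Sum>k<K. fourier_term 0 k (1/2)) (1/2) < e/2"
    using e tendsto_iff by (metis half_gt_zero)
  moreover have "(\<lambda>K. B / real K) \<longlonglongrightarrow> 0"
    by (intro tendsto_divide_0[OF tendsto_const] filterlim_at_top_imp_at_infinity
        filterlim_real_sequentially)
  then have "\<forall>\<^sub>F K in sequentially. dist (B / real K) 0 < e/2"
    using e tendsto_iff by (metis half_gt_zero)
  moreover have "\<forall>\<^sub>F K in sequentially. K > (0::nat)"
    by (rule eventually_gt_at_top)
  ultimately show "\<forall>\<^sub>F K in sequentially. \<forall>y\<in>{c..1-c}. dist (\<Sum>k<K. fourier_term 0 k y) (1/2) < e"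
  proof eventually_elim
    case (elim K)
    show ?case
    proof
      fix y assume "y \<in> {c..1-c}"
      from square_wave_partial_sum_bound[OF c elim(3) this] elim(1,2)
      show "dist (\<Sum>k<K. fourier_term 0 k y) (1/2) < e"
        unfolding B_def dist_real_def by linarith
    qed
  qed
qed

lemma summable_fourier_term_Suc: "summable (\<lambda>k. fourier_term (Suc n) k y)"
  by (rule summable_comparison_test[OF _ summable_two_div_square])
    (use abs_fourier_term_Suc_le in auto)

lemma uniform_limit_fourier_series_Suc:
  "uniform_limit UNIV (\<lambda>K y. \<Sum>k<K. fourier_term (Suc n) k y)
     (\<lambda>y. \<Sum>k. fourier_term (Suc n) k y) sequentially"
  by (rule Weierstrass_m_test[OF _ summable_two_div_square]) (use abs_fourier_term_Suc_le in auto)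

lemma continuous_on_fourier_series_Suc: "continuous_on S (\<lambda>y. \<Sum>k. fourier_term (Suc n) k y)"
  by (rule uniform_limit_theorem[OF _ uniform_limit_fourier_series_Suc[THEN uniform_limit_on_subset]])
    (auto intro!: always_eventually continuous_intros continuous_on_fourier_term)

lemma has_real_derivative_fourier_series_Suc:
  assumes unif: "\<And>c. 0 < c \<Longrightarrow> c \<le> 1/2 \<Longrightarrow>
      uniform_limit {c..1-c} (\<lambda>K y. \<Sum>k<K. fourier_term n k y) f sequentially"
    and y: "0 < y" "y < 1"
  shows "((\<lambda>y. \<Sum>k. fourier_term (Suc n) k y) has_real_derivative f y) (at y)"
proof -
  define c where "c = min y (1 - y) / 2"
  have c: "0 < c" "c \<le> 1/2" using y by (auto simp: c_def)
  have "c \<le> y / 2" "c \<le> (1 - y) / 2" unfolding c_def by auto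
  then have y_int: "y \<in> interior {c..1-c}" using y by simp
  then have y_in: "y \<in> {c..1-c}" using interior_subset by blast
  have "uniformly_convergent_on {c..1-c} (\<lambda>K y. \<Sum>k<K. fourier_term n k y)"
    using unif[OF c] unfolding uniformly_convergent_on_def by blast
  from has_field_derivative_series'(2)[OF convex_real_interval(5)
      has_field_derivative_at_within[OF has_real_derivative_fourier_term] this
      y_in summable_fourier_term_Suc y_int]
  have "((\<lambda>y. \<Sum>k. fourier_term (Suc n) k y) has_real_derivative (\<Sum>k. fourier_term n k y)) (at y)" .
  moreover have "(\<lambda>k. fourier_term n k y) sums f y"
    unfolding sums_def by (rule tendsto_uniform_limitI[OF unif[OF c] y_in])
  ultimately show ?thesis by (simp add: sums_iff)
qed

text \<open>Both sides have derivative \<open>E_n/(2 n!)\<close> on \<open>(0,1)\<close>, and both satisfy \<open>g(1) = -g(0)\<close>,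
  which fixes the constant of integration.\<close>
lemma fourier_series_Suc_eq_euler_scaled:
  assumes unif: "\<And>c. 0 < c \<Longrightarrow> c \<le> 1/2 \<Longrightarrow>
      uniform_limit {c..1-c} (\<lambda>K y. \<Sum>k<K. fourier_term n k y) (\<lambda>y. euler_scaled n y / 2) sequentially"
    and y: "y \<in> {0..1}"
  shows "(\<Sum>k. fourier_term (Suc n) k y) = euler_scaled (Suc n) y / 2"
proof -
  define H where "H y = (\<Sum>k. fourier_term (Suc n) k y) - euler_scaled (Suc n) y / 2" for y
  have deriv: "(H has_real_derivative 0) (at t)" if "0 < t" "t < 1" for t
    using DERIV_diff[OF has_real_derivative_fourier_series_Suc[OF unif that]
        DERIV_cdivide[OF has_real_derivative_euler_scaled[of n t], of 2]]
    unfolding H_def[abs_def] by simp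
  have cont: "continuous_on {0..1} H"
    unfolding H_def[abs_def]
    by (intro continuous_intros continuous_on_fourier_series_Suc continuous_on_euler_scaled) simp
  have "H 1 = H 0" by (rule DERIV_isconst_end[OF _ cont deriv]) auto
  moreover have "(\<Sum>k. fourier_term (Suc n) k 1) = - (\<Sum>k. fourier_term (Suc n) k 0)"
    using fourier_term_add_int[of "Suc n" _ 0 1]
    by (simp add: suminf_minus[OF summable_fourier_term_Suc, symmetric])
  ultimately have "H 0 = 0"
    using euler_scaled_one_plus_zero[of "Suc n"] unfolding H_def by simp
  moreover have "H y = H 0" by (rule DERIV_isconst2[OF _ cont deriv]) (use y in auto)
  ultimately show ?thesis unfolding H_def by simp
qed

lemma uniform_limit_fourier_euler_scaled:
  assumes "0 < c" "c \<le> 1/2"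
  shows "uniform_limit {c..1-c} (\<lambda>K y. \<Sum>k<K. fourier_term n k y) (\<lambda>y. euler_scaled n y / 2) sequentially"
  using assms
proof (induction n arbitrary: c)
  case 0
  then show ?case using uniform_limit_square_wave by simp
next
  case (Suc n)
  have "(\<Sum>k. fourier_term (Suc n) k y) = euler_scaled (Suc n) y / 2" if "y \<in> {c..1-c}" for y
    using Suc.IH that Suc.prems by (intro fourier_series_Suc_eq_euler_scaled) auto
  then have "uniform_limit {c..1-c} (\<lambda>K y. \<Sum>k<K. fourier_term (Suc n) k y)
      (\<lambda>y. \<Sum>k. fourier_term (Suc n) k y) sequentially \<longleftrightarrow> ?case"
    by (intro uniform_limit_cong') auto
  then show ?case
    using uniform_limit_on_subset[OF uniform_limit_fourier_series_Suc] by blast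
qed

lemma fourier_term_sums_euler_scaled:
  assumes "0 \<le> y" "y < 1" and "n \<noteq> 0 \<or> y \<noteq> 0"
  shows "(\<lambda>k. fourier_term n k y) sums (euler_scaled n y / 2)"
proof (cases n)
  case 0
  define c where "c = min y (1 - y)"
  have "0 < c" "c \<le> 1/2" "y \<in> {c..1-c}" using assms 0 by (auto simp: c_def min_def)
  with 0 show ?thesis
    unfolding sums_def by (intro tendsto_uniform_limitI[OF uniform_limit_fourier_euler_scaled])
next
  case (Suc m)
  have "(\<Sum>k. fourier_term (Suc m) k y) = euler_scaled (Suc m) y / 2"
    using assms by (intro fourier_series_Suc_eq_euler_scaled uniform_limit_fourier_euler_scaled) auto
  with Suc show ?thesis
    using summable_fourier_term_Suc by (simp add: sums_iff)
qed

lemma fourier_term_sums_euler_bar: "(\<lambda>k. fourier_term n k y) sums (euler_bar n y / (2 * fact n))"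
proof -
  define z where "z = \<lfloor>y\<rfloor>"
  define f where "f = frac y"
  have f: "0 \<le> f" "f < 1" "f = 0 \<longleftrightarrow> y \<in> \<int>"
    unfolding f_def by (auto simp: frac_lt_1 frac_eq_0_iff)
  have shift: "fourier_term n k y = (-1) powi z * fourier_term n k f" for k
    using fourier_term_add_int[of n k f z] by (simp add: z_def f_def frac_def)
  show ?thesis
  proof (cases "n = 0 \<and> y \<in> \<int>")
    case True
    then have "fourier_term n k y = 0" for k
      unfolding shift using f by (simp add: fourier_term_0)
    with True show ?thesis by (simp add: euler_bar_def)
  next
    case False
    then have "(\<lambda>k. (-1) powi z * fourier_term n k f) sums ((-1) powi z * (euler_scaled n f / 2))"
      using f by (intro sums_mult fourier_term_sums_euler_scaled) auto
    moreover have "euler_bar n y / (2 * fact n) = (-1) powi z * (euler_scaled n f / 2)"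
      using False by (auto simp: euler_bar_def euler_poly_eq_fact_mult_scaled z_def f_def)
    ultimately show ?thesis by (simp only: shift)
  qed
qed

definition exp_term :: "nat \<Rightarrow> int \<Rightarrow> real \<Rightarrow> complex" where
  "exp_term n m y = exp (of_real pi * \<i> * of_int m * of_real y) / (of_real pi * \<i> * of_int m) ^ Suc n"

lemma of_real_fourier_term:
  "complex_of_real (fourier_term n k y) = exp_term n (2 * int k + 1) y + exp_term n (- (2 * int k + 1)) y"
proof -
  define w where "w = (2 * real k + 1) * pi"
  define \<theta> where "\<theta> = w * y"
  define \<phi> where "\<phi> = real (Suc n) * pi / 2"
  have w: "w > 0" unfolding w_def by (simp add: add_pos_nonneg)
  have num: "exp (of_real pi * \<i> * of_int (2 * int k + 1) * of_real y) = cis \<theta>"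
    "exp (of_real pi * \<i> * of_int (- (2 * int k + 1)) * of_real y) = cis (- \<theta>)"
    unfolding cis_conv_exp \<theta>_def w_def by (simp_all add: algebra_simps)
  have "\<i> ^ Suc n = cis (pi/2) ^ Suc n" by (simp only: cis_pi_half)
  also have "\<dots> = cis \<phi>" unfolding Complex.DeMoivre \<phi>_def by (simp only: times_divide_eq_right)
  finally have "\<i> ^ Suc n = cis \<phi>" .
  moreover have "- \<i> = cis (- (pi/2))" by (simp add: cis.ctr complex_eq_iff)
  then have "(- \<i>) ^ Suc n = cis (- \<phi>)"
    unfolding \<phi>_def by (simp only: Complex.DeMoivre times_divide_eq_right mult_minus_right)
  moreover have "of_real pi * \<i> * of_int (2 * int k + 1) = \<i> * of_real w"
    "of_real pi * \<i> * of_int (- (2 * int k + 1)) = - \<i> * of_real w"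
    unfolding w_def by (simp_all add: algebra_simps)
  ultimately have den: "(of_real pi * \<i> * of_int (2 * int k + 1)) ^ Suc n = cis \<phi> * of_real (w ^ Suc n)"
    "(of_real pi * \<i> * of_int (- (2 * int k + 1))) ^ Suc n = cis (- \<phi>) * of_real (w ^ Suc n)"
    by (simp_all only: power_mult_distrib of_real_power)
  have "exp_term n (2 * int k + 1) y + exp_term n (- (2 * int k + 1)) y
      = (cis \<theta> / cis \<phi> + cis (- \<theta>) / cis (- \<phi>)) / of_real (w ^ Suc n)"
    unfolding exp_term_def num den using w by (simp add: field_simps)
  also have "cis \<theta> / cis \<phi> + cis (- \<theta>) / cis (- \<phi>) = of_real (2 * cos (\<theta> - \<phi>))"
    using cos_minus[of "\<theta> - \<phi>"] sin_minus[of "\<theta> - \<phi>"] by (simp add: cis_divide complex_eq_iff)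
  finally show ?thesis
    unfolding fourier_term_def \<theta>_def \<phi>_def w_def by simp
qed

lemma exp_two_pi_i_of_int [simp]: "exp (2 * of_real pi * \<i> * of_int s) = (1::complex)"
  by (simp add: exp_eq_1)

lemma sum_exp_two_pi_i_mult_div:
  fixes t b :: int
  assumes b: "b \<noteq> 0"
  shows "(\<Sum>l = 0..\<bar>b\<bar> - 1. exp (2 * of_real pi * \<i> * of_int t * of_int l / of_int b))
       = (if b dvd t then of_int \<bar>b\<bar> else (0::complex))"
proof -
  define \<omega> where "\<omega> = exp (2 * of_real pi * \<i> * of_int t / of_int b :: complex)"
  have pow: "exp (2 * of_real pi * \<i> * of_int t * of_nat i / of_int b) = \<omega> ^ i" for i :: nat
    unfolding \<omega>_def exp_of_nat_mult[symmetric] by (simp add: mult_ac)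
  have "{0..\<bar>b\<bar> - 1} = int ` {..<nat \<bar>b\<bar>}"
    by (auto simp: image_iff intro!: bexI[where x="nat _"])
  then have "(\<Sum>l = 0..\<bar>b\<bar> - 1. exp (2 * of_real pi * \<i> * of_int t * of_int l / of_int b))
      = (\<Sum>i<nat \<bar>b\<bar>. \<omega> ^ i)"
    by (simp add: sum.reindex pow)
  also have "\<dots> = (if b dvd t then of_int \<bar>b\<bar> else 0)"
  proof (cases "b dvd t")
    case True
    then obtain s where "t = b * s" by blast
    then have "\<omega> = exp (2 * of_real pi * \<i> * of_int s)"
      unfolding \<omega>_def using b by (simp add: field_simps)
    then have "\<omega> = 1" by (simp only: exp_two_pi_i_of_int)
    with True show ?thesis by simp
  next
    case False
    have "\<omega> \<noteq> 1"
    proof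
      assume "\<omega> = 1"
      then obtain s :: int where "2 * pi * t / b = 2 * s * pi"
        unfolding \<omega>_def exp_eq_1 by auto
      then have "real_of_int t = real_of_int (b * s)" using b by (simp add: field_simps)
      then show False using False by (simp only: of_int_eq_iff) simp
    qed
    moreover have "\<omega> ^ nat \<bar>b\<bar> = exp (2 * of_real pi * \<i> * of_int (sgn b * t))"
      unfolding \<omega>_def exp_of_nat_mult[symmetric]
      using b by (auto simp: abs_if sgn_if field_simps intro!: arg_cong[where f=exp])
    then have "\<omega> ^ nat \<bar>b\<bar> = 1" by (simp only: exp_two_pi_i_of_int)
    ultimately show ?thesis using False by (simp add: sum_gp_strict)
  qed
  finally show ?thesis .
qed

definition twist :: "int \<Rightarrow> int \<Rightarrow> real \<Rightarrow> int \<Rightarrow> complex" where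
  "twist b r x l = exp (- 2 * of_real pi * \<i> * (of_int l + of_real x) * of_int r / of_int b
                        + of_real pi * \<i> * (of_int l + of_real x) / of_int b)"

text \<open>Orthogonality of the \<open>|b|\<close>-th roots of unity: only frequencies \<open>m \<equiv> 2 r - 1 (mod 2 b)\<close>
  survive the twisted sum over \<open>l\<close>.\<close>
lemma twisted_sum_exp_term:
  fixes b r m t :: int
  assumes b: "b \<noteq> 0" and mt: "m - 2 * r + 1 = 2 * t"
  shows "(\<Sum>l = 0..\<bar>b\<bar> - 1. twist b r x l * exp_term n m ((of_int l + x) / of_int b))
       = exp (2 * of_real pi * \<i> * of_real x * of_int t / of_int b) / (of_real pi * \<i> * of_int m) ^ Suc n
         * (if b dvd t then of_int \<bar>b\<bar> else 0)"
proof -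
  have m: "(of_int m :: complex) = 2 * of_int t + 2 * of_int r - 1"
  proof -
    have "m = 2 * t + 2 * r - 1" using mt by simp
    then show ?thesis by simp
  qed
  have "twist b r x l * exp_term n m ((of_int l + x) / of_int b)
      = exp (2 * of_real pi * \<i> * of_real x * of_int t / of_int b) / (of_real pi * \<i> * of_int m) ^ Suc n
        * exp (2 * of_real pi * \<i> * of_int t * of_int l / of_int b)" for l
  proof -
    have "- 2 * of_real pi * \<i> * (of_int l + of_real x) * of_int r / of_int b
          + of_real pi * \<i> * (of_int l + of_real x) / of_int b
          + of_real pi * \<i> * of_int m * of_real ((of_int l + x) / of_int b)
        = 2 * of_real pi * \<i> * of_real x * of_int t / of_int b
          + 2 * of_real pi * \<i> * of_int t * of_int l / of_int b"
      using b unfolding m by (simp add: field_simps)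
    then show ?thesis
      unfolding twist_def exp_term_def by (simp add: exp_add[symmetric])
  qed
  then show ?thesis
    by (simp only: sum_distrib_left[symmetric] sum_exp_two_pi_i_mult_div[OF b])
qed

definition odd_window :: "nat \<Rightarrow> int set" where
  "odd_window K = {m. odd m \<and> \<bar>m\<bar> < 2 * int K}"

lemma finite_odd_window: "finite (odd_window K)"
  by (rule finite_subset[of _ "{-2 * int K..2 * int K}"]) (auto simp: odd_window_def)

lemma sum_odd_window:
  "(\<Sum>k<K. g (2 * int k + 1) + g (- (2 * int k + 1))) = sum g (odd_window K)"
proof (induction K)
  case 0
  then show ?case by (simp add: odd_window_def)
next
  case (Suc K)
  have "odd_window (Suc K) = insert (2 * int K + 1) (insert (- (2 * int K + 1)) (odd_window K))"
    unfolding odd_window_def by auto presburger+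
  moreover have "2 * int K + 1 \<notin> odd_window K" "- (2 * int K + 1) \<notin> odd_window K"
    by (auto simp: odd_window_def)
  ultimately show ?case
    using Suc by (simp add: finite_odd_window add_ac)
qed

text \<open>The \<open>d\<close> whose pole \<open>d + r/b - 1/(2b) = (2 b d + 2 r - 1) / (2 b)\<close> lies within \<open>K / |b|\<close> of 0.\<close>
definition shifted_window :: "int \<Rightarrow> int \<Rightarrow> nat \<Rightarrow> int set" where
  "shifted_window b r K = {d. \<bar>2 * b * d + 2 * r - 1\<bar> < 2 * int K}"

lemma twisted_sum_exp_term_eq_0:
  assumes b: "b \<noteq> 0" and m: "odd m" "\<And>d. m \<noteq> 2 * b * d + 2 * r - 1"
  shows "(\<Sum>l = 0..\<bar>b\<bar> - 1. twist b r x l * exp_term n m ((of_int l + x) / of_int b)) = 0"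
proof -
  define t where "t = (m - 2 * r + 1) div 2"
  have mt: "m - 2 * r + 1 = 2 * t" unfolding t_def using m(1) by presburger
  have "\<not> b dvd t"
  proof
    assume "b dvd t"
    then obtain d where "t = b * d" by blast
    with mt m(2)[of d] show False by simp
  qed
  then show ?thesis by (simp add: twisted_sum_exp_term[OF b mt])
qed

lemma twisted_sum_exp_term_pole:
  assumes b: "b \<noteq> 0"
  shows "(\<Sum>l = 0..\<bar>b\<bar> - 1. twist b r x l * exp_term n (2 * b * d + 2 * r - 1) ((of_int l + x) / of_int b))
       = of_int \<bar>b\<bar> / (2 * of_real pi * \<i> * of_int b) ^ Suc n *
         (exp (2 * of_real pi * \<i> * of_int d * of_real x) /
          (of_int d + of_int r / of_int b - 1 / (2 * of_int b)) ^ Suc n)"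
proof -
  define X :: complex where "X = of_int d + of_int r / of_int b - 1 / (2 * of_int b)"
  define Y :: complex where "Y = 2 * of_real pi * \<i> * of_int b"
  define E where "E = exp (2 * of_real pi * \<i> * of_int d * of_real x)"
  have "(2 * b * d + 2 * r - 1) - 2 * r + 1 = 2 * (b * d)" by simp
  from twisted_sum_exp_term[OF b this]
  have "(\<Sum>l = 0..\<bar>b\<bar> - 1. twist b r x l * exp_term n (2 * b * d + 2 * r - 1) ((of_int l + x) / of_int b))
      = E / (of_real pi * \<i> * of_int (2 * b * d + 2 * r - 1)) ^ Suc n * of_int \<bar>b\<bar>"
    unfolding E_def using b by (simp add: field_simps)
  also have "of_real pi * \<i> * of_int (2 * b * d + 2 * r - 1) = Y * X"
    unfolding X_def Y_def using b by (simp add: field_simps)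
  also have "E / (Y * X) ^ Suc n * of_int \<bar>b\<bar> = of_int \<bar>b\<bar> / Y ^ Suc n * (E / X ^ Suc n)"
    by (simp only: power_mult_distrib divide_inverse inverse_mult_distrib mult_ac)
  finally show ?thesis unfolding X_def Y_def E_def .
qed

text \<open>Expanding the Fourier terms into exponentials, the twisted sum keeps exactly the
  frequencies \<open>m = 2 b d + 2 r - 1\<close>, and each of them produces the \<open>d\<close>-th term of the left-hand side.\<close>
lemma twisted_fourier_partial_sum:
  fixes b r :: int and x :: real
  assumes b: "b \<noteq> 0"
  shows "(\<Sum>l = 0..\<bar>b\<bar> - 1. twist b r x l * of_real (\<Sum>k<K. fourier_term n k ((of_int l + x) / of_int b)))
       = of_int \<bar>b\<bar> / (2 * of_real pi * \<i> * of_int b) ^ Suc n *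
         (\<Sum>d\<in>shifted_window b r K. exp (2 * of_real pi * \<i> * of_int d * of_real x) /
            (of_int d + of_int r / of_int b - 1 / (2 * of_int b)) ^ Suc n)"
proof -
  define L where "L m = (\<Sum>l = 0..\<bar>b\<bar> - 1. twist b r x l * exp_term n m ((of_int l + x) / of_int b))" for m
  define pole where "pole d = 2 * b * d + 2 * r - 1" for d
  have "(\<Sum>l = 0..\<bar>b\<bar> - 1. twist b r x l * of_real (\<Sum>k<K. fourier_term n k ((of_int l + x) / of_int b)))
      = (\<Sum>k<K. L (2 * int k + 1) + L (- (2 * int k + 1)))"
    unfolding L_def of_real_sum of_real_fourier_term sum_distrib_left distrib_left sum.distrib
    by (simp only: sum.distrib sum.swap[of _ "{..<K}"])
  also have "\<dots> = sum L (odd_window K)" by (rule sum_odd_window)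
  also have "\<dots> = sum L (pole ` shifted_window b r K)"
  proof (rule sum.mono_neutral_right[OF finite_odd_window])
    show "pole ` shifted_window b r K \<subseteq> odd_window K"
      by (auto simp: pole_def shifted_window_def odd_window_def)
    show "\<forall>m\<in>odd_window K - pole ` shifted_window b r K. L m = 0"
      unfolding L_def using b
      by (auto intro!: twisted_sum_exp_term_eq_0 simp: odd_window_def shifted_window_def pole_def)
  qed
  also have "\<dots> = sum (L \<circ> pole) (shifted_window b r K)"
    using b by (intro sum.reindex) (auto simp: inj_on_def pole_def)
  also have "\<dots> = of_int \<bar>b\<bar> / (2 * of_real pi * \<i> * of_int b) ^ Suc n *
         (\<Sum>d\<in>shifted_window b r K. exp (2 * of_real pi * \<i> * of_int d * of_real x) /
            (of_int d + of_int r / of_int b - 1 / (2 * of_int b)) ^ Suc n)"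
    unfolding sum_distrib_left comp_def L_def pole_def twisted_sum_exp_term_pole[OF b] ..
  finally show ?thesis .
qed

lemma tendsto_shifted_window_sums:
  fixes b r :: int and x :: real
  assumes b: "b \<noteq> 0"
  shows "(\<lambda>K. \<Sum>d\<in>shifted_window b r K. exp (2 * of_real pi * \<i> * of_int d * of_real x) /
            (of_int d + of_int r / of_int b - 1 / (2 * of_int b)) ^ Suc n)
         \<longlonglongrightarrow> (2 * of_real pi * \<i> * of_int b) ^ Suc n / of_int \<bar>b\<bar> *
           (\<Sum>l = 0..\<bar>b\<bar> - 1. twist b r x l *
              of_real (euler_bar n ((of_int l + x) / of_int b) / (2 * fact n)))"
proof -
  define C :: complex where "C = (2 * of_real pi * \<i> * of_int b) ^ Suc n / of_int \<bar>b\<bar>"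
  have "C * (of_int \<bar>b\<bar> / (2 * of_real pi * \<i> * of_int b) ^ Suc n) = 1"
    using b by (simp add: C_def)
  then have window: "(\<Sum>d\<in>shifted_window b r K. exp (2 * of_real pi * \<i> * of_int d * of_real x) /
            (of_int d + of_int r / of_int b - 1 / (2 * of_int b)) ^ Suc n)
      = C * (\<Sum>l = 0..\<bar>b\<bar> - 1. twist b r x l * of_real (\<Sum>k<K. fourier_term n k ((of_int l + x) / of_int b)))"
    for K unfolding twisted_fourier_partial_sum[OF b] mult.assoc[symmetric] by simp
  have "(\<lambda>K. of_real (\<Sum>k<K. fourier_term n k y)) \<longlonglongrightarrow> complex_of_real (euler_bar n y / (2 * fact n))"
    for y using fourier_term_sums_euler_bar unfolding sums_def by (rule tendsto_of_real)
  then have "(\<lambda>K. C * (\<Sum>l = 0..\<bar>b\<bar> - 1. twist b r x l *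
        of_real (\<Sum>k<K. fourier_term n k ((of_int l + x) / of_int b))))
      \<longlonglongrightarrow> C * (\<Sum>l = 0..\<bar>b\<bar> - 1. twist b r x l *
        of_real (euler_bar n ((of_int l + x) / of_int b) / (2 * fact n)))"
    by (intro tendsto_mult_left tendsto_sum)
  then show ?thesis unfolding window C_def .
qed

lemma norm_sum_diff_symmetric_interval_le:
  fixes h :: "int \<Rightarrow> 'a::real_normed_vector" and M N :: nat
  assumes inner: "{-int N..int N} \<subseteq> A" and outer: "A \<subseteq> {-int N - int M..int N + int M}"
  shows "norm (sum h A - (\<Sum>d = -int N..int N. h d))
           \<le> (\<Sum>i=1..M. norm (h (int (N + i))) + norm (h (- int (N + i))))"
proof -
  define P where "P = (\<lambda>i. int (N + i)) ` {1..M}"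
  define Q where "Q = (\<lambda>i. - int (N + i)) ` {1..M}"
  have fin: "finite A" using outer by (rule finite_subset) simp
  have sub: "A - {-int N..int N} \<subseteq> P \<union> Q"
  proof
    fix d assume d: "d \<in> A - {-int N..int N}"
    with outer have excess: "\<bar>d\<bar> - int N \<in> {1..int M}" by auto
    then have "nat (\<bar>d\<bar> - int N) \<in> {1..M}" by auto
    moreover have "d = int (N + nat (\<bar>d\<bar> - int N)) \<or> d = - int (N + nat (\<bar>d\<bar> - int N))"
      using excess by (cases "0 \<le> d") auto
    ultimately show "d \<in> P \<union> Q" unfolding P_def Q_def by blast
  qed
  have "norm (sum h A - (\<Sum>d = -int N..int N. h d)) = norm (sum h (A - {-int N..int N}))"
    using fin inner by (simp add: sum_diff)
  also have "\<dots> \<le> (\<Sum>d\<in>A - {-int N..int N}. norm (h d))" by (rule norm_sum)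
  also have "\<dots> \<le> (\<Sum>d\<in>P \<union> Q. norm (h d))"
    using sub by (intro sum_mono2) (auto simp: P_def Q_def)
  also have "\<dots> = (\<Sum>d\<in>P. norm (h d)) + (\<Sum>d\<in>Q. norm (h d))"
    by (intro sum.union_disjoint) (auto simp: P_def Q_def)
  also have "\<dots> = (\<Sum>i=1..M. norm (h (int (N + i))) + norm (h (- int (N + i))))"
  proof -
    have "inj_on (\<lambda>i. int (N + i)) {1..M}" "inj_on (\<lambda>i. - int (N + i)) {1..M}"
      by (auto simp: inj_on_def)
    then show ?thesis unfolding P_def Q_def by (simp add: sum.reindex sum.distrib)
  qed
  finally show ?thesis .
qed

lemma tendsto_symmetric_sums_from_windows:
  fixes h :: "int \<Rightarrow> 'a::real_normed_vector" and M :: nat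
  assumes lim: "(\<lambda>N. sum h (A N)) \<longlonglongrightarrow> L"
    and inner: "\<And>N. {-int N..int N} \<subseteq> A N"
    and outer: "\<And>N. A N \<subseteq> {-int N - int M..int N + int M}"
    and decay: "(\<lambda>N. h (int N)) \<longlonglongrightarrow> 0" "(\<lambda>N. h (- int N)) \<longlonglongrightarrow> 0"
  shows "(\<lambda>N. \<Sum>d = -int N..int N. h d) \<longlonglongrightarrow> L"
proof -
  have "(\<lambda>N. h (int (N + i))) \<longlonglongrightarrow> 0" "(\<lambda>N. h (- int (N + i))) \<longlonglongrightarrow> 0" for i
    by (rule LIMSEQ_ignore_initial_segment[OF decay(1)] LIMSEQ_ignore_initial_segment[OF decay(2)])+
  then have tail: "(\<lambda>N. \<Sum>i=1..M. norm (h (int (N + i))) + norm (h (- int (N + i)))) \<longlonglongrightarrow> 0"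
    by (intro tendsto_null_sum tendsto_add_zero tendsto_norm_zero)
  have "(\<lambda>N. sum h (A N) - (\<Sum>d = -int N..int N. h d)) \<longlonglongrightarrow> 0"
    by (rule Lim_null_comparison[OF always_eventually tail])
      (use norm_sum_diff_symmetric_interval_le[OF inner outer] in blast)
  from tendsto_diff[OF lim this] show ?thesis by simp
qed

lemma norm_exp_two_pi_i_mult: "norm (exp (2 * of_real pi * \<i> * of_int d * of_real x) :: complex) = 1"
proof -
  have "2 * of_real pi * \<i> * of_int d * of_real x = \<i> * of_real (2 * pi * real_of_int d * x)"
    by simp
  then show ?thesis by simp
qed

lemma tendsto_unimodular_div_power:
  fixes u w :: "'a \<Rightarrow> complex"
  assumes "\<And>N. norm (u N) = 1" and "filterlim w at_infinity F" and "j \<ge> 1"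
  shows "((\<lambda>N. u N / w N ^ j) \<longlongrightarrow> 0) F"
proof (rule tendsto_norm_zero_cancel)
  have "((\<lambda>N. inverse (norm (w N)) ^ j) \<longlongrightarrow> 0) F"
    using assms(3) by (intro tendsto_null_power tendsto_inverse_0_at_top
        filterlim_at_infinity_imp_norm_at_top assms(2)) auto
  then show "((\<lambda>N. norm (u N / w N ^ j)) \<longlongrightarrow> 0) F"
    by (simp add: assms(1) norm_mult norm_inverse norm_power divide_inverse power_inverse)
qed

lemma filterlim_of_nat_plus_at_infinity:
  "filterlim (\<lambda>N. of_nat N + c :: complex) at_infinity sequentially"
  "filterlim (\<lambda>N. c - of_nat N :: complex) at_infinity sequentially"
proof -
  have inf: "filterlim (\<lambda>N. of_real (real N) :: complex) at_infinity sequentially"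
    by (rule filterlim_compose[OF filterlim_of_real_at_infinity filterlim_real_sequentially])
  then show "filterlim (\<lambda>N. of_nat N + c :: complex) at_infinity sequentially"
    by (intro tendsto_add_filterlim_at_infinity'[OF _ tendsto_const]) simp
  have "filterlim (\<lambda>N. - of_real (real N) :: complex) at_infinity sequentially"
    using inf unfolding filterlim_at_infinity_conv_norm_at_top by simp
  from tendsto_add_filterlim_at_infinity'[OF this tendsto_const]
  show "filterlim (\<lambda>N. c - of_nat N :: complex) at_infinity sequentially"
    by (simp add: add.commute)
qed

lemma interval_subset_shifted_window:
  assumes "b \<noteq> 0"
  shows "{-int N..int N} \<subseteq> shifted_window b r (nat \<bar>b\<bar> * N + nat \<bar>r\<bar> + 1)"
proof
  fix d assume "d \<in> {-int N..int N}"
  then have "\<bar>d\<bar> \<le> int N" by auto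
  then have "\<bar>b * d\<bar> \<le> \<bar>b\<bar> * int N" unfolding abs_mult by (rule mult_left_mono) simp
  then show "d \<in> shifted_window b r (nat \<bar>b\<bar> * N + nat \<bar>r\<bar> + 1)"
    unfolding shifted_window_def by auto
qed

lemma shifted_window_subset_interval:
  assumes b: "b \<noteq> 0"
  shows "shifted_window b r (nat \<bar>b\<bar> * N + nat \<bar>r\<bar> + 1)
           \<subseteq> {-int N - int (2 * nat \<bar>r\<bar> + 1)..int N + int (2 * nat \<bar>r\<bar> + 1)}"
proof
  fix d assume "d \<in> shifted_window b r (nat \<bar>b\<bar> * N + nat \<bar>r\<bar> + 1)"
  then have "\<bar>2 * b * d + 2 * r - 1\<bar> < 2 * (\<bar>b\<bar> * int N + \<bar>r\<bar> + 1)"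
    by (simp add: shifted_window_def)
  then have less: "\<bar>b\<bar> * \<bar>d\<bar> < \<bar>b\<bar> * int N + 2 * \<bar>r\<bar> + 2"
    unfolding abs_mult[symmetric] by auto
  have "\<bar>d\<bar> \<le> int N + (2 * \<bar>r\<bar> + 1)"
  proof (rule ccontr)
    assume "\<not> ?thesis"
    then have "\<bar>b\<bar> * (int N + (2 * \<bar>r\<bar> + 2)) \<le> \<bar>b\<bar> * \<bar>d\<bar>"
      by (intro mult_left_mono) auto
    moreover have "2 * \<bar>r\<bar> + 2 \<le> \<bar>b\<bar> * (2 * \<bar>r\<bar> + 2)"
      using b mult_right_mono[of 1 "\<bar>b\<bar>" "2 * \<bar>r\<bar> + 2"] by simp
    ultimately show False using less by (simp add: distrib_left)
  qed
  then show "d \<in> {-int N - int (2 * nat \<bar>r\<bar> + 1)..int N + int (2 * nat \<bar>r\<bar> + 1)}"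
    by auto
qed

lemma two_pi_i_power_prefactor_eq:
  fixes b :: int
  assumes "b \<noteq> 0"
  shows "(2 * of_real pi * \<i>) ^ Suc n * of_int (sgn b) / (2 * fact n * of_int b powi (1 - int (Suc n)))
       = (2 * of_real pi * \<i> * of_int b) ^ Suc n / of_int \<bar>b\<bar> / (2 * fact n :: complex)"
proof -
  have "(of_int b :: complex) powi (1 - int (Suc n)) = inverse (of_int b) ^ n"
    by (simp add: power_int_def)
  moreover have "(of_int (sgn b) :: complex) = of_int b / of_int \<bar>b\<bar>"
    using assms by (simp add: sgn_if)
  ultimately show ?thesis
    using assms by (simp add: field_simps power_inverse power_mult_distrib)
qed

theorem lemma2p7:
  fixes j :: nat and b r :: int and x :: real
  assumes "j \<ge> 1" and "b \<noteq> 0"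
  shows "(\<lambda>N::nat. \<Sum>d = - int N..int N.
            exp (2 * of_real pi * \<i> * of_int d * of_real x) /
            (of_int d + of_int r / of_int b - 1 / (2 * of_int b)) ^ j)
         \<longlonglongrightarrow>
         ((2 * of_real pi * \<i>) ^ j * of_int (sgn b) /
            (2 * fact (j - 1) * (of_int b) powi (1 - int j)) *
          (\<Sum>l = 0..\<bar>b\<bar> - 1.
             exp (- 2 * of_real pi * \<i> * (of_int l + of_real x) * of_int r / of_int b
                  + of_real pi * \<i> * (of_int l + of_real x) / of_int b) *
             of_real (euler_bar (j - 1) ((of_int l + x) / of_int b))) :: complex)"
proof -
  obtain n where j: "j = Suc n" using assms(1) by (cases j) auto
  define h where "h d = exp (2 * of_real pi * \<i> * of_int d * of_real x) /
      (of_int d + of_int r / of_int b - 1 / (2 * of_int b)) ^ j" for d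
  define L :: complex where "L = (2 * of_real pi * \<i> * of_int b) ^ j / of_int \<bar>b\<bar> *
      (\<Sum>l = 0..\<bar>b\<bar> - 1. twist b r x l * of_real (euler_bar n ((of_int l + x) / of_int b) / (2 * fact n)))"
  have "strict_mono (\<lambda>N. nat \<bar>b\<bar> * N + nat \<bar>r\<bar> + 1)"
    using assms(2) by (simp add: strict_mono_Suc_iff)
  from LIMSEQ_subseq_LIMSEQ[OF tendsto_shifted_window_sums[where r=r and x=x and n=n, OF assms(2)] this]
  have "(\<lambda>N. sum h (shifted_window b r (nat \<bar>b\<bar> * N + nat \<bar>r\<bar> + 1))) \<longlonglongrightarrow> L"
    unfolding h_def L_def j comp_def .
  then have "(\<lambda>N. \<Sum>d = -int N..int N. h d) \<longlonglongrightarrow> L"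
  proof (rule tendsto_symmetric_sums_from_windows)
    have "h d = exp (2 * of_real pi * \<i> * of_int d * of_real x) /
        (of_int d + (of_int r / of_int b - 1 / (2 * of_int b))) ^ j" for d
      unfolding h_def by (simp only: add_diff_eq)
    then show "(\<lambda>N. h (int N)) \<longlonglongrightarrow> 0" "(\<lambda>N. h (- int N)) \<longlonglongrightarrow> 0"
      using assms(1) by (auto intro!: tendsto_unimodular_div_power norm_exp_two_pi_i_mult
          filterlim_of_nat_plus_at_infinity)
  qed (use interval_subset_shifted_window shifted_window_subset_interval assms(2) in blast)+
  moreover have "(2 * of_real pi * \<i>) ^ j * of_int (sgn b) / (2 * fact (j - 1) * of_int b powi (1 - int j)) *
      (\<Sum>l = 0..\<bar>b\<bar> - 1. twist b r x l * of_real (euler_bar (j - 1) ((of_int l + x) / of_int b))) = L"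
    unfolding L_def j diff_Suc_1 two_pi_i_power_prefactor_eq[OF assms(2)]
    by (simp add: sum_divide_distrib[symmetric])
  ultimately show ?thesis unfolding h_def twist_def by simp
qed

end
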